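(* Let $n\ge 2$ and $1\le m\le n-1$ be integers, and let $\alpha=(\alpha_0,\dots,\alpha_m)$ and $\beta=(\beta_0,\dots,\beta_m)$ be sequences of complex numbers. Let $A = T^{(\alpha,m)} - G^{(\alpha,m)}$ and $B = T^{(\beta,m)} - G^{(\beta,m)}$, where $T^{(\xi,m)}$ and $G^{(\xi,m)}$ are the $n\times n$ matrices defined in the context. Assume that $B$ is invertible. Set $h = \frac{1}{n+1/2}$ and, for $j=1,\dots,n$, $$\lambda_j = \frac{\alpha_0 + 2\sum_{l=1}^{m}\alpha_l\cos(l j\pi h)}{\beta_0 + 2\sum_{l=1}^{m}\beta_l\cos(l j\pi h)},\qquad \boldsymbol{x}_j=(x_{j,1},\dots,x_{j,n})^T,\quad x_{j,k} = C\sin\!\big(j\pi(n-k+1/2)h\big),\ k=1,\dots,n,$$ where $C\neq 0$ is a constant. Then for every $j=1,\dots,n$, $(\lambda_j,\boldsymbol{x}_j)$ is an eigenpair of the generalised matrix eigenvalue problem $A\boldsymbol{x}=\lambda B\boldsymbol{x}$, i.e. $A\boldsymbol{x}_j=\lambda_j B\boldsymbol{x}_j$.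
   Context: For a sequence $\xi=(\xi_0,\xi_1,\dots,\xi_m)$ of complex numbers and $m\le n-1$, $T^{(\xi,m)}\in\mathbb{C}^{n\times n}$ is the symmetric banded Toeplitz matrix with entries $T^{(\xi,m)}_{j,j+k}=\xi_{|k|}$ if $|k|\le m$ (for all $j$ and integers $k$ with $1\le j, j+k\le n$) and all other entries $0$. $H^{(\xi,m)}\in\mathbb{C}^{n\times n}$ is the matrix with entries $H^{(\xi,m)}_{j,k}=\xi_{j+k-1}$ for $j=1,\dots,m$, $k=1,\dots,m-j+1$; $H^{(\xi,m)}_{n-j+1,\,n-k+1}=\xi_{j+k}$ for $j=1,\dots,m-1$, $k=1,\dots,m-j$; and all other entries $0$. $G^{(\xi,m)}$ is the anti-diagonal transpose (flip across the anti-diagonal) of $H^{(\xi,m)}$, i.e. $G^{(\xi,m)}_{j,k}=H^{(\xi,m)}_{n+1-k,\,n+1-j}$ for all $j,k=1,\dots,n$. *)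

theory Defs
  imports Complex_Main "Jordan_Normal_Form.Matrix"
begin

text \<open>Matrices are n x n matrices of the Jordan_Normal_Form library (0-based indices);
  the entry functions below are written with the paper's 1-based indices.\<close>

definition T_entry :: "nat \<Rightarrow> (nat \<Rightarrow> complex) \<Rightarrow> nat \<Rightarrow> nat \<Rightarrow> complex" where
  "T_entry m xi j k = (if \<bar>int k - int j\<bar> \<le> int m then xi (nat \<bar>int k - int j\<bar>) else 0)"

definition H_entry :: "nat \<Rightarrow> nat \<Rightarrow> (nat \<Rightarrow> complex) \<Rightarrow> nat \<Rightarrow> nat \<Rightarrow> complex" where
  "H_entry n m xi r c =
     (if 1 \<le> r \<and> r \<le> m \<and> 1 \<le> c \<and> c \<le> m - r + 1 then xi (r + c - 1)
      else if (\<exists>j k. 1 \<le> j \<and> j \<le> m - 1 \<and> 1 \<le> k \<and> k \<le> m - j \<and> r = n - j + 1 \<and> c = n - k + 1)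
      then xi ((n + 1 - r) + (n + 1 - c))
      else 0)"

definition T_mat :: "nat \<Rightarrow> nat \<Rightarrow> (nat \<Rightarrow> complex) \<Rightarrow> complex mat" where
  "T_mat n m xi = mat n n (\<lambda>(i, k). T_entry m xi (i + 1) (k + 1))"

definition H_mat :: "nat \<Rightarrow> nat \<Rightarrow> (nat \<Rightarrow> complex) \<Rightarrow> complex mat" where
  "H_mat n m xi = mat n n (\<lambda>(i, k). H_entry n m xi (i + 1) (k + 1))"

text \<open>G is the flip of H across the anti-diagonal: G(j,k) = H(n+1-k, n+1-j) (1-based).\<close>
definition G_mat :: "nat \<Rightarrow> nat \<Rightarrow> (nat \<Rightarrow> complex) \<Rightarrow> complex mat" where
  "G_mat n m xi = mat n n (\<lambda>(i, k). H_entry n m xi (n - k) (n - i))"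

end

theory Submission
  imports Defs
begin

text \<open>
  Extend a vector t_0, ..., t_(n-1) to all integers so that it is odd about -1 and about n - 1/2:
  t(-1) = 0, t(-2-z) = -t(z) and t(2n-1-z) = -t(z). The corner matrix G collects exactly the
  reflected terms, so row i of (T - G) t is the full symmetric Toeplitz sum
  sum over |d| <= m of xi_|d| t(i+d); since m <= n - 1, each index i+d needs at most one
  reflection. The eigenvector x_j, extended by the same sine formula, has these symmetries
  precisely because h = 1/(n + 1/2), and satisfies t(i+l) + t(i-l) = 2 cos(l j pi h) t(i), so the
  Toeplitz sum is the symbol xi_0 + 2 sum xi_l cos(l j pi h) times t(i). Thus x_j is a common
  eigenvector of A and B, and invertibility of B makes the symbol of beta nonzero.
\<close>

text \<open>Coefficient of t_k in the value at z of a sequence t with the three reflection symmetries.\<close>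
definition reflection_weight :: "nat \<Rightarrow> int \<Rightarrow> nat \<Rightarrow> complex" where
  "reflection_weight n z k =
     of_bool (int k = z) - of_bool (int k = -2 - z) - of_bool (int k = 2 * int n - 1 - z)"

lemma sum_lessThan_of_bool_int_eq:
  fixes f :: "nat \<Rightarrow> complex"
  shows "(\<Sum>k<n. of_bool (int k = w) * f k) = (if 0 \<le> w \<and> w < int n then f (nat w) else 0)"
proof -
  have "{..<n} \<inter> {k. int k = w} = (if 0 \<le> w \<and> w < int n then {nat w} else {})"
    by auto
  then show ?thesis by simp
qed

lemma reflected_eq_sum_reflection_weight:
  fixes t :: "int \<Rightarrow> complex"
  assumes "t (-1) = 0" "\<And>z. t (-2 - z) = - t z" "\<And>z. t (2 * int n - 1 - z) = - t z"
    and "- int n - 1 \<le> z" "z \<le> 2 * int n - 1"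
  shows "t z = (\<Sum>k<n. reflection_weight n z k * t (int k))"
proof -
  have "(\<Sum>k<n. reflection_weight n z k * t (int k)) =
      (if 0 \<le> z \<and> z < int n then t z else 0)
    - (if 0 \<le> -2 - z \<and> -2 - z < int n then t (-2 - z) else 0)
    - (if 0 \<le> 2 * int n - 1 - z \<and> 2 * int n - 1 - z < int n then t (2 * int n - 1 - z) else 0)"
    by (simp add: reflection_weight_def left_diff_distrib sum_subtractf sum_lessThan_of_bool_int_eq)
  also have "\<dots> = t z"
  proof -
    consider "z < -1" | "z = -1" | "0 \<le> z" "z < int n" | "int n \<le> z" by linarith
    then show ?thesis using assms by cases auto
  qed
  finally show ?thesis ..
qed

lemma G_mat_entry:
  assumes "i < n" "k < n" "m \<le> n - 1"
  shows "G_mat n m \<xi> $$ (i, k) =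
    (if 2 * n \<le> m + 1 + i + k then \<xi> (2 * n - 1 - i - k) else 0)
    + (if i + k + 2 \<le> m then \<xi> (i + k + 2) else 0)"
proof -
  have upper: "(1 \<le> n - k \<and> n - k \<le> m \<and> 1 \<le> n - i \<and> n - i \<le> m - (n - k) + 1)
      \<longleftrightarrow> 2 * n \<le> m + 1 + i + k"
    using assms by auto
  have lower: "(\<exists>r c. 1 \<le> r \<and> r \<le> m - 1 \<and> 1 \<le> c \<and> c \<le> m - r
        \<and> n - k = n - r + 1 \<and> n - i = n - c + 1) \<longleftrightarrow> i + k + 2 \<le> m"
  proof
    assume "i + k + 2 \<le> m"
    then show "\<exists>r c. 1 \<le> r \<and> r \<le> m - 1 \<and> 1 \<le> c \<and> c \<le> m - r
        \<and> n - k = n - r + 1 \<and> n - i = n - c + 1"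
      using assms by (intro exI[of _ "k + 1"] exI[of _ "i + 1"]) auto
  qed (use assms in auto)
  have "\<not> (2 * n \<le> m + 1 + i + k \<and> i + k + 2 \<le> m)"
    using assms by auto
  moreover have "G_mat n m \<xi> $$ (i, k) = H_entry n m \<xi> (n - k) (n - i)"
    using assms by (simp add: G_mat_def)
  ultimately show ?thesis
    using assms unfolding H_entry_def upper lower
    by (auto intro!: arg_cong[where f = \<xi>])
qed

lemma sum_symmetric_interval_delta:
  fixes f :: "int \<Rightarrow> complex"
  shows "(\<Sum>d\<in>{-int m..int m}. f d * of_bool (d = a)) = (if \<bar>a\<bar> \<le> int m then f a else 0)"
proof -
  have "{-int m..int m} \<inter> {d. d = a} = (if \<bar>a\<bar> \<le> int m then {a} else {})"
    by auto
  then show ?thesis by simp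
qed

lemma T_minus_G_entry_eq_sum:
  assumes "i < n" "k < n" "m \<le> n - 1"
  shows "(T_mat n m \<xi> - G_mat n m \<xi>) $$ (i, k)
    = (\<Sum>d\<in>{-int m..int m}. \<xi> (nat \<bar>d\<bar>) * reflection_weight n (int i + d) k)"
proof -
  have weight: "reflection_weight n (int i + d) k = of_bool (d = int k - int i)
    - of_bool (d = - 2 - int i - int k) - of_bool (d = 2 * int n - 1 - int i - int k)" for d
    unfolding reflection_weight_def by (intro arg_cong2[where f = minus] arg_cong[where f = of_bool]) auto
  have "(\<Sum>d\<in>{-int m..int m}. \<xi> (nat \<bar>d\<bar>) * reflection_weight n (int i + d) k)
    = (if \<bar>int k - int i\<bar> \<le> int m then \<xi> (nat \<bar>int k - int i\<bar>) else 0)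
    - (if \<bar>- 2 - int i - int k\<bar> \<le> int m then \<xi> (nat \<bar>- 2 - int i - int k\<bar>) else 0)
    - (if \<bar>2 * int n - 1 - int i - int k\<bar> \<le> int m
       then \<xi> (nat \<bar>2 * int n - 1 - int i - int k\<bar>) else 0)"
    unfolding weight right_diff_distrib sum_subtractf sum_symmetric_interval_delta ..
  also have "\<dots> = T_entry m \<xi> (i + 1) (k + 1)
    - ((if 2 * n \<le> m + 1 + i + k then \<xi> (2 * n - 1 - i - k) else 0)
       + (if i + k + 2 \<le> m then \<xi> (i + k + 2) else 0))"
  proof -
    have "\<bar>- 2 - int i - int k\<bar> = int (i + k + 2)"
      by simp
    moreover have "\<bar>2 * int n - 1 - int i - int k\<bar> = int (2 * n - 1 - i - k)"
      using assms by simp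
    ultimately show ?thesis
      using assms unfolding T_entry_def by (simp only: nat_int) auto
  qed
  also have "\<dots> = T_entry m \<xi> (i + 1) (k + 1) - G_mat n m \<xi> $$ (i, k)"
    using assms by (simp add: G_mat_entry)
  finally show ?thesis
    using assms by (simp add: T_mat_def G_mat_def)
qed

lemma T_minus_G_mult_vec_nth:
  fixes t :: "int \<Rightarrow> complex"
  assumes "m \<le> n - 1" "i < n"
    and "t (-1) = 0" "\<And>z. t (-2 - z) = - t z" "\<And>z. t (2 * int n - 1 - z) = - t z"
  shows "((T_mat n m \<xi> - G_mat n m \<xi>) *\<^sub>v vec n (\<lambda>k. t (int k))) $ i
    = (\<Sum>d\<in>{-int m..int m}. \<xi> (nat \<bar>d\<bar>) * t (int i + d))"
proof -
  let ?D = "{-int m..int m}"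
  have "(\<Sum>d\<in>?D. \<xi> (nat \<bar>d\<bar>) * t (int i + d))
    = (\<Sum>d\<in>?D. \<xi> (nat \<bar>d\<bar>) * (\<Sum>k<n. reflection_weight n (int i + d) k * t (int k)))"
    using assms by (intro sum.cong refl arg_cong[where f = "(*) _"] reflected_eq_sum_reflection_weight)
      auto
  also have "\<dots> = (\<Sum>k<n. (\<Sum>d\<in>?D. \<xi> (nat \<bar>d\<bar>) * reflection_weight n (int i + d) k) * t (int k))"
    by (simp add: sum_distrib_left sum_distrib_right sum.swap[of _ ?D] mult.assoc)
  also have "\<dots> = (\<Sum>k<n. (T_mat n m \<xi> - G_mat n m \<xi>) $$ (i, k) * t (int k))"
    using assms by (simp add: T_minus_G_entry_eq_sum)
  also have "\<dots> = ((T_mat n m \<xi> - G_mat n m \<xi>) *\<^sub>v vec n (\<lambda>k. t (int k))) $ i"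
    using assms by (simp add: T_mat_def G_mat_def scalar_prod_def lessThan_atLeast0)
  finally show ?thesis ..
qed

definition toeplitz_symbol :: "nat \<Rightarrow> (nat \<Rightarrow> complex) \<Rightarrow> real \<Rightarrow> complex" where
  "toeplitz_symbol m \<xi> \<theta> = \<xi> 0 + 2 * (\<Sum>l = 1..m. \<xi> l * complex_of_real (cos (real l * \<theta>)))"

lemma sum_symmetric_interval:
  fixes g :: "int \<Rightarrow> complex"
  shows "(\<Sum>d\<in>{-int m..int m}. g d) = g 0 + (\<Sum>l = 1..m. g (int l) + g (- int l))"
proof (induction m)
  case (Suc m)
  have "{-int (Suc m)..int (Suc m)} = insert (int (Suc m)) (insert (- int (Suc m)) {-int m..int m})"
    by auto
  then show ?case using Suc by (simp add: algebra_simps)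
qed simp

lemma symmetric_toeplitz_sum_eq_symbol:
  fixes t :: "int \<Rightarrow> complex"
  assumes "\<And>l. t (i + int l) + t (i - int l) = 2 * complex_of_real (cos (real l * \<theta>)) * t i"
  shows "(\<Sum>d\<in>{-int m..int m}. \<xi> (nat \<bar>d\<bar>) * t (i + d)) = toeplitz_symbol m \<xi> \<theta> * t i"
proof -
  have "(\<Sum>d\<in>{-int m..int m}. \<xi> (nat \<bar>d\<bar>) * t (i + d))
    = \<xi> 0 * t i + (\<Sum>l = 1..m. \<xi> l * (t (i + int l) + t (i - int l)))"
    unfolding sum_symmetric_interval by (simp add: algebra_simps)
  also have "\<dots> = \<xi> 0 * t i + (\<Sum>l = 1..m. \<xi> l * (2 * complex_of_real (cos (real l * \<theta>)) * t i))"
    by (simp only: assms)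
  finally show ?thesis
    by (simp add: toeplitz_symbol_def algebra_simps sum_distrib_left sum_distrib_right)
qed

text \<open>Indices are 0-based: the paper's x_(j,k) is C times sine_mode n j (k - 1).\<close>
definition sine_mode :: "nat \<Rightarrow> nat \<Rightarrow> int \<Rightarrow> complex" where
  "sine_mode n j z = complex_of_real (sin (real j * pi / (real n + 1/2) * (real n - 1/2 - of_int z)))"

lemma sine_mode_minus_one: "sine_mode n j (-1) = 0"
proof -
  have "real j * pi / (real n + 1/2) * (real n - 1/2 - of_int (-1)) = real j * pi"
    by (simp add: field_simps)
  then show ?thesis unfolding sine_mode_def by simp
qed

lemma sine_mode_reflect_low: "sine_mode n j (-2 - z) = - sine_mode n j z"
proof -
  have "real j * pi / (real n + 1/2) * (real n - 1/2 - of_int (-2 - z))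
      = 2 * real j * pi - real j * pi / (real n + 1/2) * (real n - 1/2 - of_int z)"
    by (simp add: field_simps)
  then show ?thesis unfolding sine_mode_def by (simp add: sin_diff)
qed

lemma sine_mode_reflect_high: "sine_mode n j (2 * int n - 1 - z) = - sine_mode n j z"
proof -
  have "real j * pi / (real n + 1/2) * (real n - 1/2 - of_int (2 * int n - 1 - z))
      = - (real j * pi / (real n + 1/2) * (real n - 1/2 - of_int z))"
    by (simp add: field_simps)
  then show ?thesis unfolding sine_mode_def by simp
qed

lemma sine_mode_harmonic:
  "sine_mode n j (i + int l) + sine_mode n j (i - int l)
    = 2 * complex_of_real (cos (real l * (real j * pi / (real n + 1/2)))) * sine_mode n j i"
proof -
  define \<theta> where "\<theta> = real j * pi / (real n + 1/2)"
  define a where "a = \<theta> * (real n - 1/2 - of_int i)"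
  have "\<theta> * (real n - 1/2 - of_int (i + int l)) = a - real l * \<theta>"
    "\<theta> * (real n - 1/2 - of_int (i - int l)) = a + real l * \<theta>"
    unfolding a_def by (simp_all add: algebra_simps)
  moreover have "sin (a - b) + sin (a + b) = 2 * cos b * sin a" for b
    by (simp add: sin_diff sin_add)
  ultimately show ?thesis
    unfolding sine_mode_def \<theta>_def[symmetric] a_def[symmetric] by (simp flip: of_real_add)
qed

lemma sine_mode_last_nonzero:
  assumes "0 < j" "j \<le> 2 * n"
  shows "sine_mode n j (int n - 1) \<noteq> 0"
proof -
  define q where "q = real j / (2 * real n + 1)"
  have "real j * pi / (real n + 1/2) * (real n - 1/2 - of_int (int n - 1)) = pi * q"
    unfolding q_def by (simp add: field_simps)
  moreover have "0 < q" "q < 1"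
    using assms by (auto simp: q_def)
  then have "0 < sin (pi * q)"
    by (intro sin_gt_zero) (simp_all add: mult_less_cancel_left1)
  ultimately show ?thesis unfolding sine_mode_def by simp
qed

lemma T_minus_G_sine_mode_eigenvector:
  assumes "m \<le> n - 1"
  shows "(T_mat n m \<xi> - G_mat n m \<xi>) *\<^sub>v vec n (\<lambda>i. C * sine_mode n j (int i))
    = toeplitz_symbol m \<xi> (real j * pi / (real n + 1/2)) \<cdot>\<^sub>v vec n (\<lambda>i. C * sine_mode n j (int i))"
proof (rule eq_vecI)
  fix i assume "i < dim_vec (toeplitz_symbol m \<xi> (real j * pi / (real n + 1/2)) \<cdot>\<^sub>v vec n (\<lambda>i. C * sine_mode n j (int i)))"
  then have i: "i < n" by simp
  let ?t = "\<lambda>z. C * sine_mode n j z"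
  have "((T_mat n m \<xi> - G_mat n m \<xi>) *\<^sub>v vec n (\<lambda>k. ?t (int k))) $ i
    = (\<Sum>d\<in>{-int m..int m}. \<xi> (nat \<bar>d\<bar>) * ?t (int i + d))"
    using assms i by (intro T_minus_G_mult_vec_nth)
      (simp_all add: sine_mode_minus_one sine_mode_reflect_low sine_mode_reflect_high)
  also have "\<dots> = toeplitz_symbol m \<xi> (real j * pi / (real n + 1/2)) * ?t (int i)"
    by (intro symmetric_toeplitz_sum_eq_symbol)
      (simp only: distrib_left[symmetric] sine_mode_harmonic mult.left_commute)
  finally show "((T_mat n m \<xi> - G_mat n m \<xi>) *\<^sub>v vec n (\<lambda>k. ?t (int k))) $ i
    = (toeplitz_symbol m \<xi> (real j * pi / (real n + 1/2)) \<cdot>\<^sub>v vec n (\<lambda>k. ?t (int k))) $ i"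
    using i by simp
qed (simp add: T_mat_def G_mat_def)

lemma invertible_mat_mult_vec_eq_zero:
  fixes B :: "'a :: semiring_1 mat"
  assumes "invertible_mat B" "B \<in> carrier_mat n n" "x \<in> carrier_vec n" "B *\<^sub>v x = 0\<^sub>v n"
  shows "x = 0\<^sub>v n"
proof -
  obtain B' where left: "B' * B = 1\<^sub>m (dim_row B')" and right: "B * B' = 1\<^sub>m (dim_row B)"
    using assms(1) unfolding invertible_mat_def inverts_mat_def by blast
  have B': "B' \<in> carrier_mat n n"
    using arg_cong[OF left, of dim_col] arg_cong[OF right, of dim_col] assms(2) by auto
  have "x = (B' * B) *\<^sub>v x"
    using left B' assms(3) by simp
  also have "\<dots> = B' *\<^sub>v (B *\<^sub>v x)"
    using B' assms(2,3) by simp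
  finally show ?thesis
    using B' assms(4) by auto
qed

lemma generalized_eigenpair_of_common_eigenvector:
  fixes A B :: "'a :: field mat"
  assumes "A *\<^sub>v x = a \<cdot>\<^sub>v x" "B *\<^sub>v x = b \<cdot>\<^sub>v x"
    and "invertible_mat B" "B \<in> carrier_mat n n" "x \<in> carrier_vec n" "x \<noteq> 0\<^sub>v n"
  shows "A *\<^sub>v x = (a / b) \<cdot>\<^sub>v (B *\<^sub>v x)"
proof -
  have "b \<noteq> 0"
  proof
    assume "b = 0"
    then have "B *\<^sub>v x = 0\<^sub>v n"
      using assms(2,5) by auto
    then show False
      using invertible_mat_mult_vec_eq_zero assms(3-6) by blast
  qed
  then show ?thesis
    using assms(1,2) by (simp add: smult_smult_assoc)
qed

lemma T_minus_G_sine_mode_generalized_eigenpair: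
  assumes "m \<le> n - 1" "invertible_mat (T_mat n m \<beta> - G_mat n m \<beta>)" "C \<noteq> 0" "0 < j" "j \<le> 2 * n"
  defines "x \<equiv> vec n (\<lambda>i. C * sine_mode n j (int i))" and "\<theta> \<equiv> real j * pi / (real n + 1/2)"
  shows "(T_mat n m \<alpha> - G_mat n m \<alpha>) *\<^sub>v x
    = (toeplitz_symbol m \<alpha> \<theta> / toeplitz_symbol m \<beta> \<theta>) \<cdot>\<^sub>v ((T_mat n m \<beta> - G_mat n m \<beta>) *\<^sub>v x)"
proof -
  have "n \<noteq> 0"
    using assms(4,5) by simp
  then have "x $ (n - 1) \<noteq> 0"
    using assms(3-5) sine_mode_last_nonzero[of j n] by (simp add: x_def of_nat_diff)
  then have "x \<noteq> 0\<^sub>v n"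
    using \<open>n \<noteq> 0\<close> by auto
  moreover have "(T_mat n m \<xi> - G_mat n m \<xi>) *\<^sub>v x = toeplitz_symbol m \<xi> \<theta> \<cdot>\<^sub>v x" for \<xi>
    unfolding x_def \<theta>_def using assms(1) by (rule T_minus_G_sine_mode_eigenvector)
  moreover have "T_mat n m \<beta> - G_mat n m \<beta> \<in> carrier_mat n n" "x \<in> carrier_vec n"
    by (auto simp: x_def T_mat_def G_mat_def)
  ultimately show ?thesis
    using assms(2) by (intro generalized_eigenpair_of_common_eigenvector)
qed

theorem mainTheorem2:
  fixes n m :: nat and \<alpha> \<beta> :: "nat \<Rightarrow> complex" and C :: complex
  assumes "n \<ge> 2" and "1 \<le> m" and "m \<le> n - 1"
    and "invertible_mat (T_mat n m \<beta> - G_mat n m \<beta>)"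
    and "C \<noteq> 0"
  shows "\<forall>j \<in> {1..n}.
    (let h = 1 / (real n + 1/2);
         A = T_mat n m \<alpha> - G_mat n m \<alpha>;
         B = T_mat n m \<beta> - G_mat n m \<beta>;
         lam = (\<alpha> 0 + 2 * (\<Sum>l = 1..m. \<alpha> l * complex_of_real (cos (real l * real j * pi * h)))) /
              (\<beta> 0 + 2 * (\<Sum>l = 1..m. \<beta> l * complex_of_real (cos (real l * real j * pi * h))));
         xj = vec n (\<lambda>i. C * complex_of_real (sin (real j * pi * (real n - real (i + 1) + 1/2) * h)))
     in A *\<^sub>v xj = lam \<cdot>\<^sub>v (B *\<^sub>v xj))"
proof -
  have eigenpair: "(T_mat n m \<alpha> - G_mat n m \<alpha>) *\<^sub>v vec n (\<lambda>i. C * sine_mode n j (int i))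
    = (toeplitz_symbol m \<alpha> (real j * pi / (real n + 1/2)) / toeplitz_symbol m \<beta> (real j * pi / (real n + 1/2)))
      \<cdot>\<^sub>v ((T_mat n m \<beta> - G_mat n m \<beta>) *\<^sub>v vec n (\<lambda>i. C * sine_mode n j (int i)))"
    if "j \<in> {1..n}" for j
    using assms that by (intro T_minus_G_sine_mode_generalized_eigenpair) auto
  have vec_eq: "vec n (\<lambda>i. C * complex_of_real
      (sin (real j * pi * (real n - real (i + 1) + 1/2) * (1 / (real n + 1/2)))))
    = vec n (\<lambda>i. C * sine_mode n j (int i))" for j
    unfolding sine_mode_def by (intro eq_vecI) (simp_all add: field_simps)
  show ?thesis
    unfolding Let_def vec_eq using eigenpair by (simp add: toeplitz_symbol_def mult.assoc)
qed

end
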